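(* Assume there is a measure $\lambda$ on $\mathcal{X}$ with $T(\cdot\mid x)\ll\lambda$ for every $x$, with densities $t(\cdot\mid x)=dT(\cdot\mid x)/d\lambda$ forming a uniformly bounded, equicontinuous family (for every $x'\in\mathcal{X}$ and $\epsilon>0$ there is $\delta>0$ such that $d(y,x')<\delta$ implies $|t(y\mid x)-t(x'\mid x)|<\epsilon$ for all $x$). Let $\mu,\nu$ be priors and let $f_{n-}^\mu$, $f_{n-}^\nu$ denote the densities of $\pi_{n-}^\mu$, $\pi_{n-}^\nu$ with respect to $\lambda$. Fix any sequence of measurements $y_{[0,\infty)}$. Then the collections $\mathscr{F}^\mu=\{f_{n-}^\mu: n\in\mathbb{N}\}$ and $\mathscr{F}^\nu=\{f_{n-}^\nu:n\in\mathbb{N}\}$ are uniformly bounded, equicontinuous families.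
   Context: Setting: $\mathcal{X},\mathcal{Y},\mathcal{Z}$ are Polish spaces, $d$ the metric on $\mathcal{X}$. $T$ is a transition kernel on $\mathcal{X}$; $\{Z_n\}$ i.i.d. with law $Q$ independent of the states; $h:\mathcal{X}\times\mathcal{Z}\to\mathcal{Y}$ measurable; $X_0\sim\mu$, $Y_n=h(X_n,Z_n)$; $P^\mu$ the joint law. Predictor $\pi_{n-}^{\mu}=P^{\mu}(X_n\in\cdot\mid Y_0,\dots,Y_{n-1})$, evaluated along the fixed measurement sequence; the predictors are absolutely continuous with respect to $\lambda$ for $n\ge1$. *)

theory Defs
  imports "HOL-Probability.Probability"
begin

definition unif_bdd_equicont :: "('i \<Rightarrow> 'x::metric_space \<Rightarrow> real) \<Rightarrow> 'i set \<Rightarrow> bool" where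
  "unif_bdd_equicont g I \<longleftrightarrow>
     (\<exists>B. \<forall>i\<in>I. \<forall>y. \<bar>g i y\<bar> \<le> B) \<and>
     (\<forall>x'. \<forall>\<epsilon>>0. \<exists>\<delta>>0. \<forall>y. dist y x' < \<delta> \<longrightarrow> (\<forall>i\<in>I. \<bar>g i y - g i x'\<bar> < \<epsilon>))"

text \<open>Predictor sequence along a fixed measurement sequence: pi 0 = mu (prior) and
pi (n+1) = integral of T(.|x) against the filter at time n, which is a probability
measure on X (the posterior P(X_n in . | y_0..y_n)).\<close>
definition predictor_seq :: "('x::polish_space \<Rightarrow> 'x measure) \<Rightarrow> 'x measure \<Rightarrow> (nat \<Rightarrow> 'x measure) \<Rightarrow> bool" where
  "predictor_seq T \<mu> \<pi> \<longleftrightarrow>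
     \<pi> 0 = \<mu> \<and>
     (\<forall>n. \<exists>F. F \<in> space (prob_algebra borel) \<and> \<pi> (Suc n) = F \<bind> T)"

end

theory Submission
  imports Defs
begin

(* The predictor at time n+1 is F \<bind> T for the filter F at time n, and its density should be
   the mixture f(y) = \<integral> t(y|x) dF(x).  As the densities t(.|x) are uniformly bounded and
   equicontinuous, every such mixture has the same bound and the same modulus of continuity,
   whatever F is.

   That F \<bind> T has density f does not follow from Tonelli: t need not be jointly measurable
   and lam need not be sigma-finite.  Instead, on every subset A of a small ball around y0 both
   F \<bind> T and f lam are within e lam(A) of f(y0) lam(A); a Lindelof cover makes this global,
   so the two measures agree on sets of finite lam-measure.  Where some t(.|x) is positive there is
   an open neighbourhood of finite lam-measure (t(.|x) stays above half its value there while
   T x has mass 1), and off countably many such neighbourhoods both measures vanish. *)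

(* The next three lemmas assume no measurability of the integrand, which will be x \<mapsto> t(y|x). *)
lemma nn_integral_add_const_le:
  fixes g :: "'a \<Rightarrow> ennreal"
  assumes "prob_space M" and "c < top"
  shows "(\<integral>\<^sup>+x. g x + c \<partial>M) \<le> (\<integral>\<^sup>+x. g x \<partial>M) + c"
  unfolding nn_integral_def[of M "\<lambda>x. g x + c"]
proof (rule SUP_least)
  fix s assume "s \<in> {s. simple_function M s \<and> s \<le> (\<lambda>x. g x + c)}"
  then have s: "simple_function M s" and s_le: "\<And>x. s x \<le> g x + c"
    by (auto simp: le_fun_def)
  have s': "simple_function M (\<lambda>x. s x - c)"
    using s by (rule simple_function_compose1)
  have "integral\<^sup>S M s = integral\<^sup>N M s"
    using s by (simp add: nn_integral_eq_simple_integral)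
  also have "\<dots> \<le> (\<integral>\<^sup>+x. (s x - c) + c \<partial>M)"
    by (intro nn_integral_mono) (auto simp: diff_add_self_ennreal not_le)
  also have "\<dots> = (\<integral>\<^sup>+x. s x - c \<partial>M) + c"
    using s' assms(1) by (subst nn_integral_add)
      (auto simp: borel_measurable_simple_function prob_space.emeasure_space_1)
  also have "(\<integral>\<^sup>+x. s x - c \<partial>M) \<le> integral\<^sup>N M g"
    using s_le assms(2) by (intro nn_integral_mono) (auto simp: ennreal_minus_le_iff add.commute)
  finally show "integral\<^sup>S M s \<le> integral\<^sup>N M g + c"
    by (simp add: add_right_mono)
qed

lemma nn_integral_multc_le:
  fixes f :: "'a \<Rightarrow> ennreal"
  assumes "c < top"
  shows "(\<integral>\<^sup>+x. f x * c \<partial>M) \<le> (\<integral>\<^sup>+x. f x \<partial>M) * c"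
proof (cases "c = 0")
  case False
  have cancel: "a / c * c = a" for a :: ennreal
    using False assms by (simp add: ennreal_divide_times ennreal_mult_divide_eq)
  show ?thesis
    unfolding nn_integral_def[of M "\<lambda>x. f x * c"]
  proof (rule SUP_least)
    fix s assume "s \<in> {s. simple_function M s \<and> s \<le> (\<lambda>x. f x * c)}"
    then have s: "simple_function M s" and s_le: "\<And>x. s x \<le> f x * c"
      by (auto simp: le_fun_def)
    have "integral\<^sup>S M s = (\<integral>\<^sup>+x. s x / c * c \<partial>M)"
      using s by (simp add: nn_integral_eq_simple_integral cancel)
    also have "\<dots> = (\<integral>\<^sup>+x. s x / c \<partial>M) * c"
      using s by (intro nn_integral_multc) (simp add: borel_measurable_simple_function)
    also have "(\<integral>\<^sup>+x. s x / c \<partial>M) \<le> (\<integral>\<^sup>+x. f x \<partial>M)"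
    proof (rule nn_integral_mono)
      fix x
      have "s x / c \<le> f x * c / c" by (rule divide_right_mono_ennreal[OF s_le])
      then show "s x / c \<le> f x" using False assms by (simp add: ennreal_mult_divide_eq)
    qed
    finally show "integral\<^sup>S M s \<le> integral\<^sup>N M f * c"
      by (simp add: mult_right_mono)
  qed
qed simp

lemma nn_integral_multc_finite:
  fixes f :: "'a \<Rightarrow> ennreal"
  assumes "c < top"
  shows "(\<integral>\<^sup>+x. f x * c \<partial>M) = (\<integral>\<^sup>+x. f x \<partial>M) * c"
proof (cases "c = 0")
  case False
  have "(\<integral>\<^sup>+x. f x \<partial>M) = (\<integral>\<^sup>+x. f x * c * (1 / c) \<partial>M)"
    using False assms by (simp add: ennreal_times_divide ennreal_mult_divide_eq)
  also have "\<dots> \<le> (\<integral>\<^sup>+x. f x * c \<partial>M) * (1 / c)"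
    using False by (intro nn_integral_multc_le) (simp add: ennreal_divide_eq_top_iff flip: less_top)
  finally have "(\<integral>\<^sup>+x. f x \<partial>M) * c \<le> (\<integral>\<^sup>+x. f x * c \<partial>M) * (1 / c) * c"
    by (rule mult_right_mono) simp
  also have "\<dots> = (\<integral>\<^sup>+x. f x * c \<partial>M)"
    using False assms by (simp add: ennreal_times_divide ennreal_divide_times ennreal_mult_divide_eq)
  finally show ?thesis
    using nn_integral_multc_le[OF assms] by (rule antisym[rotated])
qed simp

lemma emeasure_density_le_const:
  assumes "g \<in> borel_measurable M" and "A \<in> sets M" and "\<And>y. y \<in> A \<Longrightarrow> g y \<le> b"
  shows "emeasure (density M g) A \<le> b * emeasure M A"
proof -
  have "emeasure (density M g) A = (\<integral>\<^sup>+y. g y * indicator A y \<partial>M)"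
    using assms(1,2) by (rule emeasure_density)
  also have "\<dots> \<le> (\<integral>\<^sup>+y. b * indicator A y \<partial>M)"
    using assms(3) by (intro nn_integral_mono) (simp add: indicator_def)
  also have "\<dots> = b * emeasure M A"
    using assms(2) by (rule nn_integral_cmult_indicator)
  finally show ?thesis .
qed

lemma emeasure_density_ge_const:
  assumes "g \<in> borel_measurable M" and "A \<in> sets M" and "\<And>y. y \<in> A \<Longrightarrow> c \<le> g y + e"
  shows "c * emeasure M A \<le> emeasure (density M g) A + e * emeasure M A"
proof -
  have "c * emeasure M A = (\<integral>\<^sup>+y. c * indicator A y \<partial>M)"
    using assms(2) by (rule nn_integral_cmult_indicator[symmetric])
  also have "\<dots> \<le> (\<integral>\<^sup>+y. g y * indicator A y + e * indicator A y \<partial>M)"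
    using assms(3) by (intro nn_integral_mono) (simp add: indicator_def)
  also have "\<dots> = emeasure (density M g) A + e * emeasure M A"
    using assms(1,2) by (simp add: nn_integral_add nn_integral_cmult_indicator emeasure_density)
  finally show ?thesis .
qed

lemma ennreal_le_of_forall_le_add_cmult:
  assumes "\<And>e. 0 < e \<Longrightarrow> a \<le> b + ennreal e * c" and "c < top"
  shows "a \<le> (b::ennreal)"
proof (rule ennreal_le_epsilon)
  fix e :: real assume "0 < e"
  obtain L where L: "c = ennreal L" "0 \<le> L" using assms(2) by (cases c) auto
  have "a \<le> b + ennreal (e / (L + 1)) * c"
    using \<open>0 < e\<close> L by (intro assms(1)) simp
  also have "ennreal (e / (L + 1)) * c = ennreal (e / (L + 1) * L)"
    using L \<open>0 < e\<close> by (simp flip: ennreal_mult)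
  also have "\<dots> \<le> ennreal e"
    using L \<open>0 < e\<close> by (intro ennreal_leI) (simp add: field_simps)
  finally show "a \<le> b + ennreal e" by (simp add: add_left_mono)
qed

lemma ennreal_le_add_of_abs_diff_le:
  assumes "\<bar>a - b\<bar> \<le> e" and "0 \<le> b"
  shows "ennreal a \<le> ennreal b + ennreal e"
proof -
  have "ennreal a \<le> ennreal (b + e)" using assms(1) by (intro ennreal_leI) linarith
  also have "\<dots> = ennreal b + ennreal e" using assms by (intro ennreal_plus) auto
  finally show ?thesis .
qed

lemma countable_open_cover:
  fixes S :: "'a::second_countable_topology set"
  assumes "\<And>x. x \<in> S \<Longrightarrow> \<exists>U. open U \<and> x \<in> U \<and> P U" and "P {}"
  obtains U :: "nat \<Rightarrow> 'a set" where "\<And>i. open (U i)" "\<And>i. P (U i)" "S \<subseteq> (\<Union>i. U i)"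
proof -
  obtain \<F> where \<F>: "\<F> \<subseteq> {U. open U \<and> P U}" "countable \<F>" "\<Union>\<F> = \<Union>{U. open U \<and> P U}"
    using Lindelof[of "{U. open U \<and> P U}"] by auto
  define U where "U = from_nat_into (insert {} \<F>)"
  have "range U = insert {} \<F>"
    unfolding U_def using \<F>(2) by (intro range_from_nat_into) auto
  have "S \<subseteq> \<Union>\<F>" using assms(1) \<F>(3) by blast
  show ?thesis
  proof (rule that)
    fix i
    have "U i \<in> insert {} \<F>" using \<open>range U = insert {} \<F>\<close> by blast
    then show "open (U i)" "P (U i)" using \<F>(1) assms(2) by auto
  next
    show "S \<subseteq> (\<Union>i. U i)" using \<open>S \<subseteq> \<Union>\<F>\<close> \<open>range U = insert {} \<F>\<close> by simp
  qed
qed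

lemma emeasure_le_of_countable_cover:
  fixes U :: "nat \<Rightarrow> 'a set"
  assumes sets: "sets N = sets M" "sets K = sets M"
    and U: "\<And>i. U i \<in> sets M" "space M \<subseteq> (\<Union>i. U i)"
    and local: "\<And>i A. A \<in> sets M \<Longrightarrow> A \<subseteq> U i \<Longrightarrow> emeasure M A \<le> emeasure N A + c * emeasure K A"
    and A: "A \<in> sets M"
  shows "emeasure M A \<le> emeasure N A + c * emeasure K A"
proof -
  define D where "D = disjointed U"
  have D: "range D \<subseteq> sets M" "disjoint_family D" "(\<Union>i. D i) = (\<Union>i. U i)"
    unfolding D_def using U(1)
    by (auto intro!: sets.range_disjointed_sets disjoint_family_disjointed simp: UN_disjointed_eq)
  have pieces: "disjoint_family (\<lambda>i. A \<inter> D i)" "(\<Union>i. A \<inter> D i) = A"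
    using D(2,3) U(2) sets.sets_into_space[OF A]
    by (auto intro: disjoint_family_on_bisimulation[OF D(2)])
  have split: "emeasure L A = (\<Sum>i. emeasure L (A \<inter> D i))" if "sets L = sets M" for L
  proof -
    have "range (\<lambda>i. A \<inter> D i) \<subseteq> sets L"
      using D(1) A unfolding that by auto
    then have "(\<Sum>i. emeasure L (A \<inter> D i)) = emeasure L (\<Union>i. A \<inter> D i)"
      using pieces(1) by (intro suminf_emeasure)
    then show ?thesis using pieces(2) by simp
  qed
  have "emeasure M A = (\<Sum>i. emeasure M (A \<inter> D i))" by (rule split) simp
  also have "\<dots> \<le> (\<Sum>i. emeasure N (A \<inter> D i) + c * emeasure K (A \<inter> D i))"
  proof (rule suminf_le)
    fix i
    have "D i \<subseteq> U i" unfolding D_def by (rule disjointed_subset)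
    then show "emeasure M (A \<inter> D i) \<le> emeasure N (A \<inter> D i) + c * emeasure K (A \<inter> D i)"
      using A D(1) by (intro local[of _ i]) auto
  qed auto
  also have "\<dots> = emeasure N A + c * emeasure K A"
    unfolding split[OF sets(1)] split[OF sets(2)] by (simp flip: suminf_add)
  finally show ?thesis .
qed

lemma measure_eqI_countable_cover:
  fixes U :: "nat \<Rightarrow> 'a set"
  assumes sets: "sets N = sets M"
    and U: "\<And>i. U i \<in> sets M" "space M \<subseteq> (\<Union>i. U i)"
    and local: "\<And>i A. A \<in> sets M \<Longrightarrow> A \<subseteq> U i \<Longrightarrow> emeasure M A = emeasure N A"
  shows "M = N"
proof (rule measure_eqI)
  show "sets M = sets N" using sets by simp
  fix A assume A: "A \<in> sets M"
  have "emeasure M A \<le> emeasure N A + 0 * emeasure M A"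
    by (rule emeasure_le_of_countable_cover[OF sets refl U _ A]) (simp add: local)
  moreover have "emeasure N A \<le> emeasure M A + 0 * emeasure N A"
  proof (rule emeasure_le_of_countable_cover)
    show "space N \<subseteq> (\<Union>i. U i)" using U(2) sets_eq_imp_space_eq[OF sets] by simp
    show "\<And>i A. A \<in> sets N \<Longrightarrow> A \<subseteq> U i \<Longrightarrow> emeasure N A \<le> emeasure M A + 0 * emeasure N A"
      using local sets by simp
  qed (use sets U A in auto)
  ultimately show "emeasure M A = emeasure N A" by simp
qed

lemma ennreal_le_trans_through_mult:
  fixes a b c e L :: ennreal
  assumes "a \<le> (c + e) * L" and "c * L \<le> b + e * L"
  shows "a \<le> b + 2 * e * L"
proof -
  have "a \<le> c * L + e * L" using assms(1) by (simp add: distrib_right)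
  also have "\<dots> \<le> b + e * L + e * L" using assms(2) by (rule add_right_mono)
  finally show ?thesis by (simp add: mult_2 distrib_right add.assoc)
qed

locale equicontinuous_density_kernel =
  fixes T :: "'x::polish_space \<Rightarrow> 'x measure" and lam :: "'x measure"
    and t :: "'x \<Rightarrow> 'x \<Rightarrow> real"
  assumes sets_lam: "sets lam = sets borel"
    and T_measurable: "T \<in> borel \<rightarrow>\<^sub>M prob_algebra borel"
    and t_measurable: "\<And>x. t x \<in> borel_measurable borel"
    and t_nonneg: "\<And>x y. 0 \<le> t x y"
    and T_eq_density: "\<And>x. T x = density lam (\<lambda>y. ennreal (t x y))"
    and t_bdd_equicont: "unif_bdd_equicont t UNIV"
begin

lemma t_bounded: "\<exists>B. \<forall>x y. t x y \<le> B"
proof -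
  obtain B where "\<forall>x\<in>UNIV. \<forall>y. \<bar>t x y\<bar> \<le> B"
    using t_bdd_equicont unfolding unif_bdd_equicont_def by blast
  then have "\<forall>x y. t x y \<le> B" by (simp add: abs_le_iff)
  then show ?thesis ..
qed

lemma t_equicont: "0 < e \<Longrightarrow> \<exists>d>0. \<forall>y. dist y y' < d \<longrightarrow> (\<forall>x. \<bar>t x y - t x y'\<bar> < e)"
  using t_bdd_equicont unfolding unif_bdd_equicont_def by blast

lemma ennreal_t_measurable: "(\<lambda>y. ennreal (t x y)) \<in> borel_measurable lam"
  unfolding measurable_cong_sets[OF sets_lam refl]
  by (rule measurable_compose[OF t_measurable measurable_ennreal])

lemma prob_space_T: "prob_space (T x)"
  using measurable_space[OF T_measurable] by (simp add: space_prob_algebra)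

lemma open_neighbourhood_finite_measure:
  assumes "0 < t x y"
  shows "\<exists>U. open U \<and> y \<in> U \<and> emeasure lam U < top"
proof -
  obtain d where d: "0 < d" "\<And>z. dist z y < d \<Longrightarrow> \<bar>t x z - t x y\<bar> < t x y / 2"
    using t_equicont[of "t x y / 2" y] assms by auto
  have "t x y / 2 \<le> t x z" if "z \<in> ball y d" for z
  proof -
    have "\<bar>t x z - t x y\<bar> < t x y / 2" using d(2)[of z] that by (simp add: dist_commute)
    then show ?thesis by linarith
  qed
  then have "ennreal (t x y / 2) * emeasure lam (ball y d)
      \<le> emeasure (T x) (ball y d) + 0 * emeasure lam (ball y d)"
    unfolding T_eq_density using sets_lam
    by (intro emeasure_density_ge_const ennreal_t_measurable) (auto intro: ennreal_leI)
  also have "\<dots> \<le> 1"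
    using prob_space.emeasure_le_1[OF prob_space_T] by simp
  finally have "ennreal (t x y / 2) * emeasure lam (ball y d) < top"
    using le_less_trans by fastforce
  then show ?thesis
    using assms d(1) by (intro exI[of _ "ball y d"]) (auto simp: ennreal_mult_less_top)
qed

lemma support_countable_cover:
  "\<exists>U :: nat \<Rightarrow> 'x set. (\<forall>i. open (U i) \<and> emeasure lam (U i) < top) \<and>
    {y. \<exists>x. 0 < t x y} \<subseteq> (\<Union>i. U i)"
proof -
  obtain U :: "nat \<Rightarrow> 'x set" where "\<And>i. open (U i)" "\<And>i. emeasure lam (U i) < top"
    "{y. \<exists>x. 0 < t x y} \<subseteq> (\<Union>i. U i)"
    using open_neighbourhood_finite_measure
    by (rule_tac countable_open_cover[of "{y. \<exists>x. 0 < t x y}" "\<lambda>U. emeasure lam U < top"]) auto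
  then show ?thesis by blast
qed

definition mixture_density :: "'x measure \<Rightarrow> 'x \<Rightarrow> real" where
  "mixture_density F y = enn2real (\<integral>\<^sup>+x. ennreal (t x y) \<partial>F)"

abbreviation mixture :: "'x measure \<Rightarrow> 'x measure" where
  "mixture F \<equiv> density lam (\<lambda>y. ennreal (mixture_density F y))"

lemma mixture_density_nonneg: "0 \<le> mixture_density F y"
  by (simp add: mixture_density_def)

definition approximates_on :: "'x measure \<Rightarrow> real \<Rightarrow> 'x set \<Rightarrow> bool" where
  "approximates_on F e U \<longleftrightarrow> (\<forall>A\<in>sets borel. A \<subseteq> U \<longrightarrow>
    emeasure (F \<bind> T) A \<le> emeasure (mixture F) A + ennreal e * emeasure lam A \<and>
    emeasure (mixture F) A \<le> emeasure (F \<bind> T) A + ennreal e * emeasure lam A)"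

context
  fixes F :: "'x measure"
  assumes F: "F \<in> space (prob_algebra borel)"
begin

lemma prob_space_F: "prob_space F"
  using F by (simp add: space_prob_algebra)

lemma nn_integral_t_le:
  assumes "\<And>x y. t x y \<le> B"
  shows "(\<integral>\<^sup>+x. ennreal (t x y) \<partial>F) \<le> ennreal B"
proof -
  have "(\<integral>\<^sup>+x. ennreal (t x y) \<partial>F) \<le> (\<integral>\<^sup>+x. ennreal B \<partial>F)"
    using assms by (intro nn_integral_mono ennreal_leI)
  then show ?thesis
    using prob_space.emeasure_space_1[OF prob_space_F] by simp
qed

lemma ennreal_mixture_density: "ennreal (mixture_density F y) = (\<integral>\<^sup>+x. ennreal (t x y) \<partial>F)"
proof -
  obtain B where "\<forall>x y. t x y \<le> B" using t_bounded ..
  then have "(\<integral>\<^sup>+x. ennreal (t x y) \<partial>F) \<le> ennreal B" by (intro nn_integral_t_le) simp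
  then have "(\<integral>\<^sup>+x. ennreal (t x y) \<partial>F) < top"
    using ennreal_less_top by (rule order.strict_trans1)
  then show ?thesis
    unfolding mixture_density_def by simp
qed

lemma mixture_density_le:
  assumes "\<And>x y. t x y \<le> B"
  shows "mixture_density F y \<le> B"
proof -
  have "0 \<le> B" using t_nonneg assms order.trans by blast
  moreover have "ennreal (mixture_density F y) \<le> ennreal B"
    unfolding ennreal_mixture_density by (rule nn_integral_t_le[OF assms])
  ultimately show ?thesis by (rule ennreal_le_iff[THEN iffD1])
qed

lemma mixture_density_abs_diff_le:
  assumes "\<And>x. \<bar>t x y - t x y'\<bar> \<le> e"
  shows "\<bar>mixture_density F y - mixture_density F y'\<bar> \<le> e"
proof -
  have one_side: "mixture_density F z \<le> mixture_density F z' + e"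
    if close: "\<And>x. \<bar>t x z - t x z'\<bar> \<le> e" for z z'
  proof -
    have "0 \<le> e" using close[of undefined] by linarith
    have "ennreal (mixture_density F z) \<le> (\<integral>\<^sup>+x. ennreal (t x z') + ennreal e \<partial>F)"
      unfolding ennreal_mixture_density
      using close t_nonneg by (intro nn_integral_mono ennreal_le_add_of_abs_diff_le)
    also have "\<dots> \<le> ennreal (mixture_density F z') + ennreal e"
      unfolding ennreal_mixture_density by (intro nn_integral_add_const_le prob_space_F) simp
    also have "\<dots> = ennreal (mixture_density F z' + e)"
      using \<open>0 \<le> e\<close> mixture_density_nonneg by simp
    finally show ?thesis
      by (rule ennreal_le_iff[THEN iffD1, rotated]) (simp add: \<open>0 \<le> e\<close> mixture_density_nonneg)
  qed
  show ?thesis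
    using one_side[OF assms] one_side[of y' y] assms by (simp add: abs_minus_commute)
qed

lemma continuous_mixture_density: "continuous_on UNIV (mixture_density F)"
  unfolding continuous_on_iff
proof (intro ballI allI impI)
  fix y' :: 'x and e :: real
  assume "0 < e"
  then obtain d where "0 < d" and d: "\<And>y. dist y y' < d \<Longrightarrow> \<forall>x. \<bar>t x y - t x y'\<bar> < e / 2"
    using t_equicont[of "e / 2" y'] by auto
  have "dist (mixture_density F y) (mixture_density F y') < e" if "dist y y' < d" for y
    using mixture_density_abs_diff_le[of y y' "e / 2"] d[OF that] \<open>0 < e\<close>
    by (simp add: dist_real_def less_imp_le)
  then show "\<exists>d>0. \<forall>y\<in>UNIV. dist y y' < d \<longrightarrow> dist (mixture_density F y) (mixture_density F y') < e"
    using \<open>0 < d\<close> by blast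
qed

lemma mixture_density_measurable: "mixture_density F \<in> borel_measurable borel"
  using continuous_mixture_density by (rule borel_measurable_continuous_onI)

lemma ennreal_mixture_density_measurable: "(\<lambda>y. ennreal (mixture_density F y)) \<in> borel_measurable lam"
  unfolding measurable_cong_sets[OF sets_lam refl]
  by (rule measurable_compose[OF mixture_density_measurable measurable_ennreal])

lemma sets_bind_T: "sets (F \<bind> T) = sets borel"
  using F T_measurable by (rule sets_bind')

lemma emeasure_bind_T_near_const:
  assumes A: "A \<in> sets borel" and fin: "emeasure lam A < top"
    and close: "\<And>x y. y \<in> A \<Longrightarrow> \<bar>t x y - t x y0\<bar> \<le> e"
  shows "emeasure (F \<bind> T) A \<le> (ennreal (mixture_density F y0) + ennreal e) * emeasure lam A"
    and "ennreal (mixture_density F y0) * emeasure lam A \<le> emeasure (F \<bind> T) A + ennreal e * emeasure lam A"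
proof -
  have A_lam: "A \<in> sets lam" using A sets_lam by simp
  have bind: "emeasure (F \<bind> T) A = (\<integral>\<^sup>+x. emeasure (T x) A \<partial>F)"
    using F T_measurable A by (rule emeasure_bind_prob_algebra)
  have "emeasure (F \<bind> T) A \<le> (\<integral>\<^sup>+x. (ennreal (t x y0) + ennreal e) * emeasure lam A \<partial>F)"
    unfolding bind T_eq_density using A_lam close t_nonneg
    by (intro nn_integral_mono emeasure_density_le_const ennreal_t_measurable
        ennreal_le_add_of_abs_diff_le) auto
  also have "\<dots> = (\<integral>\<^sup>+x. ennreal (t x y0) + ennreal e \<partial>F) * emeasure lam A"
    using fin by (rule nn_integral_multc_finite)
  also have "\<dots> \<le> (ennreal (mixture_density F y0) + ennreal e) * emeasure lam A"
    unfolding ennreal_mixture_density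
    by (intro mult_right_mono nn_integral_add_const_le prob_space_F) auto
  finally show "emeasure (F \<bind> T) A \<le> (ennreal (mixture_density F y0) + ennreal e) * emeasure lam A" .
  have "ennreal (mixture_density F y0) * emeasure lam A = (\<integral>\<^sup>+x. ennreal (t x y0) * emeasure lam A \<partial>F)"
    unfolding ennreal_mixture_density using fin by (rule nn_integral_multc_finite[symmetric])
  also have "\<dots> \<le> (\<integral>\<^sup>+x. emeasure (T x) A + ennreal e * emeasure lam A \<partial>F)"
    unfolding T_eq_density using A_lam close t_nonneg
    by (intro nn_integral_mono emeasure_density_ge_const ennreal_t_measurable
        ennreal_le_add_of_abs_diff_le) (auto simp: abs_minus_commute)
  also have "\<dots> \<le> emeasure (F \<bind> T) A + ennreal e * emeasure lam A"
    unfolding bind using fin by (intro nn_integral_add_const_le prob_space_F) (simp add: ennreal_mult_less_top)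
  finally show "ennreal (mixture_density F y0) * emeasure lam A
      \<le> emeasure (F \<bind> T) A + ennreal e * emeasure lam A" .
qed

lemma emeasure_mixture_near_const:
  assumes A: "A \<in> sets borel" and close: "\<And>x y. y \<in> A \<Longrightarrow> \<bar>t x y - t x y0\<bar> \<le> e"
  shows "emeasure (mixture F) A
      \<le> (ennreal (mixture_density F y0) + ennreal e) * emeasure lam A"
    and "ennreal (mixture_density F y0) * emeasure lam A
      \<le> emeasure (mixture F) A + ennreal e * emeasure lam A"
proof -
  have A_lam: "A \<in> sets lam" using A sets_lam by simp
  have close': "\<bar>mixture_density F y - mixture_density F y0\<bar> \<le> e" if "y \<in> A" for y
    using close[OF that] by (rule mixture_density_abs_diff_le)
  have upper: "ennreal (mixture_density F y) \<le> ennreal (mixture_density F y0) + ennreal e"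
    if "y \<in> A" for y
    using close'[OF that] mixture_density_nonneg by (rule ennreal_le_add_of_abs_diff_le)
  have lower: "ennreal (mixture_density F y0) \<le> ennreal (mixture_density F y) + ennreal e"
    if "y \<in> A" for y
    using close'[OF that] mixture_density_nonneg
    by (intro ennreal_le_add_of_abs_diff_le) (simp only: abs_minus_commute)+
  show "emeasure (mixture F) A
      \<le> (ennreal (mixture_density F y0) + ennreal e) * emeasure lam A"
    using ennreal_mixture_density_measurable A_lam upper by (rule emeasure_density_le_const)
  show "ennreal (mixture_density F y0) * emeasure lam A
      \<le> emeasure (mixture F) A + ennreal e * emeasure lam A"
    using ennreal_mixture_density_measurable A_lam lower by (rule emeasure_density_ge_const)
qed

lemma approximates_on_ball:
  assumes "0 < e"
  shows "\<exists>d>0. approximates_on F e (ball y0 d)"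
proof -
  obtain d where "0 < d" and d: "\<And>y. dist y y0 < d \<Longrightarrow> \<forall>x. \<bar>t x y - t x y0\<bar> < e / 2"
    using t_equicont[of "e / 2" y0] assms by auto
  have two: "2 * ennreal (e / 2) = ennreal e"
    using assms by (simp flip: ennreal_numeral ennreal_mult)
  have "emeasure (F \<bind> T) A \<le> emeasure (mixture F) A + ennreal e * emeasure lam A \<and>
      emeasure (mixture F) A \<le> emeasure (F \<bind> T) A + ennreal e * emeasure lam A"
    if A: "A \<in> sets borel" "A \<subseteq> ball y0 d" for A
  proof (cases "emeasure lam A = top")
    case True
    then show ?thesis using assms by (simp add: ennreal_mult_top)
  next
    case False
    have close: "\<bar>t x y - t x y0\<bar> \<le> e / 2" if "y \<in> A" for x y
      using d[of y] A(2) that by (auto simp: dist_commute less_imp_le)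
    note bind = emeasure_bind_T_near_const[OF A(1) _ close, unfolded less_top[symmetric], OF False]
    note mixture = emeasure_mixture_near_const[OF A(1) close]
    show ?thesis
      using ennreal_le_trans_through_mult[OF bind(1) mixture(2)] ennreal_le_trans_through_mult[OF mixture(1) bind(2)]
      by (simp add: two)
  qed
  then show ?thesis using \<open>0 < d\<close> unfolding approximates_on_def by blast
qed

lemma emeasure_bind_T_approx:
  assumes "0 < e" and A: "A \<in> sets borel"
  shows "emeasure (F \<bind> T) A \<le> emeasure (mixture F) A + ennreal e * emeasure lam A"
    and "emeasure (mixture F) A \<le> emeasure (F \<bind> T) A + ennreal e * emeasure lam A"
proof -
  have "\<exists>U. open U \<and> y \<in> U \<and> approximates_on F e U" for y
    using approximates_on_ball[OF assms(1), of y] by (metis centre_in_ball open_ball)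
  moreover have "approximates_on F e {}" by (simp add: approximates_on_def)
  ultimately obtain U :: "nat \<Rightarrow> 'x set"
    where "\<And>i. open (U i)" "\<And>i. approximates_on F e (U i)" "UNIV \<subseteq> (\<Union>i. U i)"
    by (rule countable_open_cover[of UNIV "approximates_on F e"]) auto
  then have U: "\<And>i. U i \<in> sets (F \<bind> T)" "space (F \<bind> T) \<subseteq> (\<Union>i. U i)"
    and local: "\<And>i B. B \<in> sets (F \<bind> T) \<Longrightarrow> B \<subseteq> U i \<Longrightarrow>
      emeasure (F \<bind> T) B \<le> emeasure (mixture F) B + ennreal e * emeasure lam B \<and>
      emeasure (mixture F) B \<le> emeasure (F \<bind> T) B + ennreal e * emeasure lam B"
    unfolding approximates_on_def sets_bind_T by auto
  have sets: "sets (mixture F) = sets (F \<bind> T)" "sets lam = sets (F \<bind> T)"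
    by (simp_all add: sets_lam sets_bind_T)
  have U': "\<And>i. U i \<in> sets (mixture F)" "space (mixture F) \<subseteq> (\<Union>i. U i)"
    using U sets(1) sets_eq_imp_space_eq[OF sets(1)] by auto
  show "emeasure (F \<bind> T) A \<le> emeasure (mixture F) A + ennreal e * emeasure lam A"
    using sets(1,2) U _ A[folded sets_bind_T] by (rule emeasure_le_of_countable_cover) (use local in blast)
  show "emeasure (mixture F) A \<le> emeasure (F \<bind> T) A + ennreal e * emeasure lam A"
    using sets(1)[symmetric] _ U' _ by (rule emeasure_le_of_countable_cover) (use local sets A sets_bind_T in auto)
qed

lemma emeasure_bind_T_eq_finite:
  assumes "A \<in> sets borel" and "emeasure lam A < top"
  shows "emeasure (F \<bind> T) A = emeasure (mixture F) A"
  using ennreal_le_of_forall_le_add_cmult[OF emeasure_bind_T_approx(1)[OF _ assms(1)] assms(2)]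
    ennreal_le_of_forall_le_add_cmult[OF emeasure_bind_T_approx(2)[OF _ assms(1)] assms(2)]
  by (rule antisym)

lemma emeasure_bind_T_eq_vanishing:
  assumes A: "A \<in> sets borel" and vanish: "\<And>x y. y \<in> A \<Longrightarrow> t x y = 0"
  shows "emeasure (F \<bind> T) A = emeasure (mixture F) A"
proof -
  have A_lam: "A \<in> sets lam" using A sets_lam by simp
  have "emeasure (T x) A \<le> 0 * emeasure lam A" for x
    unfolding T_eq_density using ennreal_t_measurable A_lam by (rule emeasure_density_le_const) (simp add: vanish)
  then have "emeasure (F \<bind> T) A = 0"
    using emeasure_bind_prob_algebra[OF F T_measurable A] by simp
  moreover have "emeasure (mixture F) A \<le> 0 * emeasure lam A"
    using ennreal_mixture_density_measurable A_lam
    by (rule emeasure_density_le_const) (simp add: vanish mixture_density_def)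
  ultimately show ?thesis by simp
qed

lemma bind_T_eq_mixture: "F \<bind> T = mixture F"
proof -
  obtain U :: "nat \<Rightarrow> 'x set" where U: "\<And>i. open (U i)" "\<And>i. emeasure lam (U i) < top"
    and support: "{y. \<exists>x. 0 < t x y} \<subseteq> (\<Union>i. U i)"
    using support_countable_cover by blast
  define P where "P = case_nat (- (\<Union>i. U i)) U"
  show ?thesis
  proof (rule measure_eqI_countable_cover)
    show "sets (mixture F) = sets (F \<bind> T)"
      by (simp add: sets_lam sets_bind_T)
    show "P i \<in> sets (F \<bind> T)" for i
      using U(1) by (cases i) (auto simp: P_def sets_bind_T)
    show "space (F \<bind> T) \<subseteq> (\<Union>i. P i)"
    proof
      fix y
      have "y \<in> P 0 \<or> (\<exists>i. y \<in> P (Suc i))" by (auto simp: P_def)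
      then show "y \<in> (\<Union>i. P i)" by blast
    qed
    fix i A
    assume A: "A \<in> sets (F \<bind> T)" "A \<subseteq> P i"
    then have A_borel: "A \<in> sets borel" by (simp add: sets_bind_T)
    show "emeasure (F \<bind> T) A = emeasure (mixture F) A"
    proof (cases i)
      case 0
      have "t x y = 0" if "y \<in> A" for x y
      proof -
        have "y \<notin> (\<Union>i. U i)" using A(2) that 0 by (auto simp: P_def)
        then have "\<not> 0 < t x y" using support by blast
        then show ?thesis using t_nonneg[of x y] by linarith
      qed
      then show ?thesis by (rule emeasure_bind_T_eq_vanishing[OF A_borel])
    next
      case (Suc j)
      have "emeasure lam A \<le> emeasure lam (U j)"
        using A(2) U(1) A_borel sets_lam Suc by (intro emeasure_mono) (auto simp: P_def)
      then show ?thesis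
        using A_borel U(2)[of j] by (intro emeasure_bind_T_eq_finite) (simp_all add: le_less_trans)
    qed
  qed
qed

end

lemma unif_bdd_equicont_mixture_density:
  assumes Fs: "\<And>i. i \<in> I \<Longrightarrow> Fs i \<in> space (prob_algebra borel)"
  shows "unif_bdd_equicont (\<lambda>i. mixture_density (Fs i)) I"
proof -
  obtain B where B: "\<forall>x y. t x y \<le> B" using t_bounded ..
  have bound: "\<bar>mixture_density (Fs i) y\<bar> \<le> B" if "i \<in> I" for i y
  proof -
    have "mixture_density (Fs i) y \<le> B"
      by (rule mixture_density_le[OF Fs[OF that]]) (use B in blast)
    then show ?thesis using mixture_density_nonneg[of "Fs i" y] by linarith
  qed
  have equicont: "\<exists>d>0. \<forall>y. dist y y' < d \<longrightarrow>
      (\<forall>i\<in>I. \<bar>mixture_density (Fs i) y - mixture_density (Fs i) y'\<bar> < e)"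
    if e: "0 < e" for y' e
  proof -
    obtain d where "0 < d" and d: "\<And>y. dist y y' < d \<Longrightarrow> \<forall>x. \<bar>t x y - t x y'\<bar> < e / 2"
      using t_equicont[of "e / 2" y'] e by auto
    have "\<bar>mixture_density (Fs i) y - mixture_density (Fs i) y'\<bar> < e"
      if "i \<in> I" "dist y y' < d" for i y
      using mixture_density_abs_diff_le[OF Fs[OF that(1)], of y y' "e / 2"] d[OF that(2)] \<open>0 < e\<close>
      by (simp add: less_imp_le)
    then show ?thesis using \<open>0 < d\<close> by blast
  qed
  show ?thesis
    unfolding unif_bdd_equicont_def using bound equicont by blast
qed

lemma predictor_seq_densities:
  assumes "predictor_seq T \<mu> \<pi>"
  shows "\<exists>f :: nat \<Rightarrow> 'x \<Rightarrow> real.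
    (\<forall>n\<ge>1. f n \<in> borel_measurable borel \<and> (\<forall>y. 0 \<le> f n y) \<and> \<pi> n = density lam (\<lambda>y. ennreal (f n y))) \<and>
    unif_bdd_equicont f {1..}"
proof -
  have "\<forall>n. \<exists>F. F \<in> space (prob_algebra borel) \<and> \<pi> (Suc n) = F \<bind> T"
    using assms unfolding predictor_seq_def by blast
  then obtain Fs where Fs: "\<And>n. Fs n \<in> space (prob_algebra borel)" "\<And>n. \<pi> (Suc n) = Fs n \<bind> T"
    by metis
  define f where "f n = mixture_density (Fs (n - 1))" for n
  have "f n \<in> borel_measurable borel \<and> (\<forall>y. 0 \<le> f n y) \<and> \<pi> n = density lam (\<lambda>y. ennreal (f n y))"
    if "1 \<le> n" for n
  proof -
    have "\<pi> n = Fs (n - 1) \<bind> T" using Fs(2)[of "n - 1"] that by simp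
    then show ?thesis
      unfolding f_def
      using mixture_density_measurable[OF Fs(1)] mixture_density_nonneg bind_T_eq_mixture[OF Fs(1)]
      by simp
  qed
  moreover have "unif_bdd_equicont f {1..}"
    unfolding f_def using Fs(1) by (rule unif_bdd_equicont_mixture_density)
  ultimately show ?thesis by blast
qed

end

theorem lemma4:
  fixes T :: "'x::polish_space \<Rightarrow> 'x measure"
    and lam :: "'x measure"
    and t :: "'x \<Rightarrow> 'x \<Rightarrow> real"
    and \<mu> \<nu> :: "'x measure"
    and \<pi>\<mu> \<pi>\<nu> :: "nat \<Rightarrow> 'x measure"
  assumes "sets lam = sets borel"
    and "T \<in> borel \<rightarrow>\<^sub>M prob_algebra borel"
    and "\<And>x. t x \<in> borel_measurable borel"
    and "\<And>x y. t x y \<ge> 0"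
    and "\<And>x. T x = density lam (\<lambda>y. ennreal (t x y))"
    and "unif_bdd_equicont t UNIV"
    and "\<mu> \<in> space (prob_algebra borel)"
    and "\<nu> \<in> space (prob_algebra borel)"
    and "predictor_seq T \<mu> \<pi>\<mu>"
    and "predictor_seq T \<nu> \<pi>\<nu>"
  shows "\<exists>f\<mu> f\<nu> :: nat \<Rightarrow> 'x \<Rightarrow> real.
           (\<forall>n\<ge>1. f\<mu> n \<in> borel_measurable borel \<and> (\<forall>y. f\<mu> n y \<ge> 0) \<and>
                  \<pi>\<mu> n = density lam (\<lambda>y. ennreal (f\<mu> n y))) \<and>
           (\<forall>n\<ge>1. f\<nu> n \<in> borel_measurable borel \<and> (\<forall>y. f\<nu> n y \<ge> 0) \<and>
                  \<pi>\<nu> n = density lam (\<lambda>y. ennreal (f\<nu> n y))) \<and>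
           unif_bdd_equicont f\<mu> {1..} \<and> unif_bdd_equicont f\<nu> {1..}"
proof -
  interpret equicontinuous_density_kernel T lam t
    using assms(1-6) by unfold_locales
  obtain f\<mu> where "(\<forall>n\<ge>1. f\<mu> n \<in> borel_measurable borel \<and> (\<forall>y. 0 \<le> f\<mu> n y) \<and>
      \<pi>\<mu> n = density lam (\<lambda>y. ennreal (f\<mu> n y))) \<and> unif_bdd_equicont f\<mu> {1..}"
    using predictor_seq_densities[OF assms(9)] by blast
  moreover obtain f\<nu> where "(\<forall>n\<ge>1. f\<nu> n \<in> borel_measurable borel \<and> (\<forall>y. 0 \<le> f\<nu> n y) \<and>
      \<pi>\<nu> n = density lam (\<lambda>y. ennreal (f\<nu> n y))) \<and> unif_bdd_equicont f\<nu> {1..}"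
    using predictor_seq_densities[OF assms(10)] by blast
  ultimately show ?thesis by blast
qed

end
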